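(* Let $\mathfrak d$ be a delta operator on $\mathbb K[x]$ with basic sequence $(p_n(x))_{n\ge0}$. For each $i\in\mathbb N$ let $\Phi_i=\sum_{j\ge0}a^{(i)}_j\,\mathfrak d^{\,i+j}$, where $a^{(i)}_j\in\mathbb K$ and $a^{(i)}_0\neq0$ (the sum acts on each polynomial as a finite sum, since $\mathfrak d$ lowers degree by one). (1) There exists a unique sequence $(f_n(x))_{n\ge0}$ of polynomials with $\deg f_n=n$ such that $\varepsilon_0(\Phi_i(f_n))=n!\,\delta_{i,n}$ for all $i,n\in\mathbb N$. Moreover, for every $n$, $$f_n(x)=\frac{n!}{a^{(0)}_0a^{(1)}_0\cdots a^{(n)}_0}\det\Lambda^{(n)},$$ where $\Lambda^{(n)}$ is the $(n+1)\times(n+1)$ matrix (rows and columns indexed by $0,\dots,n$, entries in $\mathbb K[x]$) with $(i,j)$-entry equal to $a^{(i)}_{j-i}$ if $0\le i\le\min(j,n-1)$, equal to $p_j(x)/j!$ if $i=n$, and $0$ otherwise. (2) The sequence $(f_n(x))_{n\ge0}$ is a basis of $\mathbb K[x]$, and for every $f\in\mathbb K[x]$, $$f(x)=\sum_{n=0}^{\deg f}\frac{\varepsilon_0(\Phi_n(f))}{n!}\,f_n(x).$$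
   Context: $\mathbb K$ is a field of characteristic zero. For $a\in\mathbb K$, $E_a$ is the shift operator $f(x)\mapsto f(x+a)$ on $\mathbb K[x]$; a linear operator $S$ on $\mathbb K[x]$ is shift-invariant if $SE_a=E_aS$ for all $a\in\mathbb K$. A delta operator is a shift-invariant linear operator $\mathfrak d$ on $\mathbb K[x]$ such that $\mathfrak d(x)$ is a nonzero constant. The basic sequence of $\mathfrak d$ is the unique sequence of polynomials $(p_n(x))_{n\ge0}$ with $\deg p_n=n$, $p_0=1$, $p_n(0)=0$ for $n\ge1$, and $\mathfrak d(p_n)=np_{n-1}$ for $n\ge1$. For $z\in\mathbb K$, $\varepsilon_z$ denotes evaluation at $z$. $\delta_{i,n}$ is the Kronecker delta. *)

theory Defs
  imports "HOL-Computational_Algebra.Polynomial" "Jordan_Normal_Form.Determinant"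
begin

definition lin_op :: "('a::field poly \<Rightarrow> 'a poly) \<Rightarrow> bool" where
  "lin_op S \<longleftrightarrow> (\<forall>f g. S (f + g) = S f + S g) \<and> (\<forall>c f. S (smult c f) = smult c (S f))"

definition shift_op :: "'a::field \<Rightarrow> 'a poly \<Rightarrow> 'a poly" where
  "shift_op c f = pcompose f [:c, 1:]"

definition shift_invariant :: "('a::field poly \<Rightarrow> 'a poly) \<Rightarrow> bool" where
  "shift_invariant S \<longleftrightarrow> lin_op S \<and> (\<forall>c f. S (shift_op c f) = shift_op c (S f))"

definition delta_op :: "('a::field poly \<Rightarrow> 'a poly) \<Rightarrow> bool" where
  "delta_op d \<longleftrightarrow> shift_invariant d \<and> (\<exists>c. c \<noteq> 0 \<and> d [:0, 1:] = [:c:])"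

definition basic_seq :: "('a::field poly \<Rightarrow> 'a poly) \<Rightarrow> (nat \<Rightarrow> 'a poly) \<Rightarrow> bool" where
  "basic_seq d p \<longleftrightarrow> (\<forall>n. degree (p n) = n) \<and> p 0 = 1 \<and>
     (\<forall>n\<ge>1. poly (p n) 0 = 0) \<and> (\<forall>n\<ge>1. d (p n) = smult (of_nat n) (p (n - 1)))"

text \<open>Phi_i = sum_j a i j * d^(i+j), applied to f (finite sum: terms with j > degree f vanish).\<close>
definition Phi :: "(nat \<Rightarrow> nat \<Rightarrow> 'a::field) \<Rightarrow> ('a poly \<Rightarrow> 'a poly) \<Rightarrow> nat \<Rightarrow> 'a poly \<Rightarrow> 'a poly" where
  "Phi a d i f = (\<Sum>j\<le>degree f. smult (a i j) ((d ^^ (i + j)) f))"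

definition Lambda_mat :: "(nat \<Rightarrow> nat \<Rightarrow> 'a::field_char_0) \<Rightarrow> (nat \<Rightarrow> 'a poly) \<Rightarrow> nat \<Rightarrow> 'a poly mat" where
  "Lambda_mat a p n = mat (n + 1) (n + 1) (\<lambda>(i, j).
     if i < n \<and> i \<le> j then [: a i (j - i) :]
     else if i = n then smult (1 / fact j) (p j)
     else 0)"

definition poly_seq_basis :: "(nat \<Rightarrow> 'a::field poly) \<Rightarrow> bool" where
  "poly_seq_basis f \<longleftrightarrow>
     (\<forall>g. \<exists>c N. g = (\<Sum>n\<le>N. smult (c n) (f n))) \<and>
     (\<forall>c N. (\<Sum>n\<le>N. smult (c n) (f n)) = 0 \<longrightarrow> (\<forall>n\<le>N. c n = 0))"

end

theory Submission
  imports Defs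
begin

text \<open>Put \<open>q k = p k / k!\<close>. Then \<open>d (q (k + 1)) = q k\<close> and \<open>q k\<close> vanishes at 0 unless \<open>k = 0\<close>,
  so every polynomial expands as \<open>g = (\<Sum>k. \<epsilon>\<^sub>0 (d\<^sup>k g) \<cdot> q k)\<close>. In these coordinates the
  functional \<open>g \<mapsto> \<epsilon>\<^sub>0 (\<Phi>\<^sub>i g)\<close> is the \<open>i\<close>-th row of the upper triangular matrix with entries
  \<open>a i (k - i)\<close>, whose diagonal \<open>a i 0\<close> is nonzero. Hence a polynomial of degree at most \<open>N\<close>
  killed by the first \<open>N + 1\<close> functionals is zero; this gives uniqueness, the expansion formula
  and the basis property. For existence, the \<open>q\<close>-coordinates of \<open>f\<^sub>n\<close> must solve the triangular
  system with right-hand side \<open>n! e\<^sub>n\<close>. By Cramer's rule they are \<open>n!/det\<close> times the cofactors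
  of the last row, and summing them against \<open>q k\<close> is the Laplace expansion of \<open>det \<Lambda>\<^sup>(\<^sup>n\<^sup>)\<close>
  along its last row.\<close>

lemma smult_sum_right: "smult c (sum f A) = (\<Sum>x\<in>A. smult c (f x))"
  by (induction A rule: infinite_finite_induct) (auto simp: smult_add_right)

lemma lin_op_zero: "lin_op S \<Longrightarrow> S 0 = 0"
  unfolding lin_op_def by (metis smult_0_left)

lemma lin_op_diff: "lin_op S \<Longrightarrow> S (f - g) = S f - S g"
  unfolding lin_op_def by (metis eq_diff_eq)

lemma lin_op_sum: "lin_op S \<Longrightarrow> S (sum f A) = (\<Sum>x\<in>A. S (f x))"
  by (induction A rule: infinite_finite_induct) (auto simp: lin_op_zero lin_op_def)

lemma lin_op_funpow: "lin_op S \<Longrightarrow> lin_op (S ^^ m)"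
  unfolding lin_op_def by (induction m) auto

lemma delta_op_const:
  assumes "delta_op d"
  shows "d [:c:] = 0"
proof -
  obtain b where b: "d [:0, 1:] = [:b:]" and lin: "lin_op d"
    and shift: "\<And>f. d (shift_op 1 f) = shift_op 1 (d f)"
    using assms unfolding delta_op_def shift_invariant_def by blast
  have "shift_op 1 [:0, 1:] = [:0, 1:] + 1"
    by (simp add: shift_op_def one_pCons pcompose_pCons)
  then have "d [:0, 1:] + d 1 = d (shift_op 1 [:0, 1:])"
    using lin unfolding lin_op_def by metis
  also have "\<dots> = d [:0, 1:]"
    using shift b by (simp add: shift_op_def)
  finally have "d 1 = 0" by simp
  moreover have "[:c:] = smult c 1" by simp
  ultimately show ?thesis
    using lin unfolding lin_op_def by (metis smult_0_right)
qed

text \<open>\<open>Phi_coeff a i k\<close> is the coefficient of \<open>d\<^sup>k\<close> in \<open>\<Phi>\<^sub>i\<close>.\<close>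

definition Phi_coeff :: "(nat \<Rightarrow> nat \<Rightarrow> 'a) \<Rightarrow> nat \<Rightarrow> nat \<Rightarrow> 'a::zero" where
  "Phi_coeff a i k = (if i \<le> k then a i (k - i) else 0)"

definition Phi_mat :: "(nat \<Rightarrow> nat \<Rightarrow> 'a) \<Rightarrow> nat \<Rightarrow> 'a::comm_ring_1 mat" where
  "Phi_mat a n = mat (Suc n) (Suc n) (\<lambda>(i, k). Phi_coeff a i k)"

lemma sum_Phi_coeff_shift:
  fixes a :: "nat \<Rightarrow> nat \<Rightarrow> 'a::semiring_0"
  shows "(\<Sum>k\<le>N + i. Phi_coeff a i k * h k) = (\<Sum>j\<le>N. a i j * h (i + j))"
proof -
  have "(\<Sum>k\<le>N + i. Phi_coeff a i k * h k) = (\<Sum>k\<in>{0 + i..N + i}. a i (k - i) * h k)"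
    by (rule sum.mono_neutral_cong_right) (auto simp: Phi_coeff_def)
  also have "\<dots> = (\<Sum>j\<le>N. a i j * h (i + j))"
    by (subst sum.shift_bounds_cl_nat_ivl) (simp add: atLeast0AtMost add.commute)
  finally show ?thesis .
qed

lemma sum_Phi_coeff_diag:
  fixes a :: "nat \<Rightarrow> nat \<Rightarrow> 'a::semiring_0"
  shows "(\<Sum>k\<le>m. Phi_coeff a m k * h k) = a m 0 * h m"
proof -
  have "(\<Sum>k\<le>m. Phi_coeff a m k * h k) = (\<Sum>k\<in>{m}. Phi_coeff a m k * h k)"
    by (rule sum.mono_neutral_right) (auto simp: Phi_coeff_def)
  then show ?thesis
    by (simp add: Phi_coeff_def)
qed

lemma det_Phi_mat: "det (Phi_mat a n) = (\<Prod>k\<le>n. a k 0)"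
proof -
  have "upper_triangular (Phi_mat a n)"
    unfolding upper_triangular_def by (auto simp: Phi_mat_def Phi_coeff_def)
  then have "det (Phi_mat a n) = prod_list (diag_mat (Phi_mat a n))"
    by (rule det_upper_triangular[where n = "Suc n"]) (simp add: Phi_mat_def)
  also have "\<dots> = prod_list (map (\<lambda>k. a k 0) [0..<Suc n])"
    unfolding diag_mat_def by (intro arg_cong[where f = prod_list] map_cong)
      (auto simp: Phi_mat_def Phi_coeff_def)
  also have "\<dots> = (\<Prod>k\<le>n. a k 0)"
    by (simp only: prod.distinct_set_conv_list[symmetric, OF distinct_upt] set_upt
        atLeast0LessThan lessThan_Suc_atMost)
  finally show ?thesis .
qed

lemma Phi_mat_cofactor_last_row:
  assumes "i \<le> n"
  shows "(\<Sum>k\<le>n. Phi_coeff a i k * cofactor (Phi_mat a n) n k)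
         = (if i = n then \<Prod>k\<le>n. a k 0 else 0)"
proof -
  have A: "Phi_mat a n \<in> carrier_mat (Suc n) (Suc n)"
    by (simp add: Phi_mat_def)
  have "(\<Sum>k\<le>n. Phi_coeff a i k * cofactor (Phi_mat a n) n k)
        = (Phi_mat a n * adj_mat (Phi_mat a n)) $$ (i, n)"
    using assms by (simp add: times_mat_def scalar_prod_def adj_mat_def Phi_mat_def
        atLeast0LessThan lessThan_Suc_atMost)
  also have "\<dots> = (if i = n then det (Phi_mat a n) else 0)"
    using assms by (simp add: adj_mat(2)[OF A])
  finally show ?thesis
    by (simp add: det_Phi_mat)
qed

text \<open>Deleting the last row of \<open>\<Lambda>\<^sup>(\<^sup>n\<^sup>)\<close> leaves the constant polynomials of \<open>Phi_mat a n\<close>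
  with its last row deleted, so the cofactors along the last row agree.\<close>

lemma det_Lambda_mat:
  "det (Lambda_mat a p n) = (\<Sum>k\<le>n. smult (cofactor (Phi_mat a n) n k / fact k) (p k))"
proof -
  interpret const_poly: comm_ring_hom "\<lambda>x::'a. [:x:]"
    by unfold_locales (simp_all add: one_pCons)
  define L where "L = Lambda_mat a p n"
  have L: "L \<in> carrier_mat (Suc n) (Suc n)"
    by (simp add: L_def Lambda_mat_def)
  have "mat_delete L n k = map_mat (\<lambda>x. [:x:]) (mat_delete (Phi_mat a n) n k)" for k
    by (rule eq_matI) (auto simp: mat_delete_def L_def Phi_mat_def Lambda_mat_def Phi_coeff_def)
  then have cofactor_L: "cofactor L n k = [:cofactor (Phi_mat a n) n k:]" for k
    unfolding cofactor_def by (simp add: const_poly.hom_mult const_poly.hom_power const_poly.hom_uminus)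
  have last_row_L: "L $$ (n, k) = smult (1 / fact k) (p k)" if "k \<le> n" for k
    using that by (simp add: L_def Lambda_mat_def)
  have "det L = (\<Sum>k<Suc n. L $$ (n, k) * cofactor L n k)"
    by (rule laplace_expansion_row[OF L]) simp
  also have "\<dots> = (\<Sum>k\<le>n. smult (cofactor (Phi_mat a n) n k / fact k) (p k))"
    by (auto simp: lessThan_Suc_atMost last_row_L cofactor_L intro!: sum.cong)
  finally show ?thesis
    unfolding L_def .
qed

locale delta_basic =
  fixes d :: "'a::field_char_0 poly \<Rightarrow> 'a poly" and p :: "nat \<Rightarrow> 'a poly"
  assumes delta: "delta_op d" and basic: "basic_seq d p"
begin

lemma lin_op_funpow_d: "lin_op (d ^^ m)"
  using delta lin_op_funpow unfolding delta_op_def shift_invariant_def by blast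

definition divided_basic :: "nat \<Rightarrow> 'a poly" where
  "divided_basic k = smult (1 / fact k) (p k)"

lemma degree_divided_basic: "degree (divided_basic k) = k"
  using basic unfolding divided_basic_def basic_seq_def by simp

lemma divided_basic_0: "divided_basic 0 = 1"
  using basic unfolding divided_basic_def basic_seq_def by simp

lemma lead_coeff_divided_basic: "lead_coeff (divided_basic k) \<noteq> 0"
  by (metis degree_divided_basic divided_basic_0 leading_coeff_0_iff one_neq_zero degree_0)

lemma poly_divided_basic_0: "poly (divided_basic k) 0 = (if k = 0 then 1 else 0)"
  using basic unfolding divided_basic_def basic_seq_def by auto

lemma d_divided_basic_Suc: "d (divided_basic (Suc k)) = divided_basic k"
proof -
  have "d (p (Suc k)) = smult (of_nat (Suc k)) (p k)"
    using basic unfolding basic_seq_def by auto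
  moreover have "1 / fact (Suc k) * of_nat (Suc k) = (1 / fact k :: 'a)"
    by (simp add: field_simps del: of_nat_Suc)
  ultimately show ?thesis
    using lin_op_funpow_d[of 1] by (simp add: divided_basic_def lin_op_def)
qed

lemma funpow_d_divided_basic:
  "(d ^^ m) (divided_basic k) = (if m \<le> k then divided_basic (k - m) else 0)"
proof (induction m)
  case (Suc m)
  have "d (divided_basic 0) = 0"
    using delta_op_const[OF delta, of 1] by (simp add: divided_basic_0 one_pCons)
  moreover have "d 0 = 0"
    using lin_op_funpow_d[of 1] lin_op_zero by simp
  ultimately show ?case
  proof (cases "Suc m \<le> k")
    case True
    then have "k - m = Suc (k - Suc m)" by simp
    with Suc True show ?thesis by (simp add: d_divided_basic_Suc)
  qed (use Suc in auto)
qed simp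

definition basic_coeff :: "'a poly \<Rightarrow> nat \<Rightarrow> 'a" where
  "basic_coeff g k = poly ((d ^^ k) g) 0"

lemma basic_coeff_divided_basic: "basic_coeff (divided_basic k) m = (if m = k then 1 else 0)"
  by (auto simp: basic_coeff_def funpow_d_divided_basic poly_divided_basic_0)

lemma basic_coeff_sum: "basic_coeff (sum f A) k = (\<Sum>x\<in>A. basic_coeff (f x) k)"
  using lin_op_funpow_d by (simp add: basic_coeff_def lin_op_sum poly_sum)

lemma basic_coeff_smult: "basic_coeff (smult c g) k = c * basic_coeff g k"
  using lin_op_funpow_d by (simp add: basic_coeff_def lin_op_def)

lemma basic_coeff_sum_smult:
  "basic_coeff (\<Sum>k\<le>N. smult (c k) (divided_basic k)) m = (if m \<le> N then c m else 0)"
  by (simp add: basic_coeff_sum basic_coeff_smult basic_coeff_divided_basic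
      if_distrib[where f="\<lambda>x. _ * x"] cong: if_cong)

lemma divided_basic_span:
  assumes "degree g \<le> N"
  shows "\<exists>c. g = (\<Sum>k\<le>N. smult (c k) (divided_basic k))"
  using assms
proof (induction N arbitrary: g)
  case 0
  then have "g = smult (coeff g 0) (divided_basic 0)"
    by (simp add: divided_basic_0 degree_0_id)
  then show ?case by auto
next
  case (Suc N)
  define lc where "lc = coeff g (Suc N) / lead_coeff (divided_basic (Suc N))"
  define r where "r = g - smult lc (divided_basic (Suc N))"
  have "coeff r (Suc N) = 0"
    using lead_coeff_divided_basic[of "Suc N"] by (simp add: r_def lc_def degree_divided_basic)
  moreover have "degree r \<le> Suc N"
    using Suc.prems by (simp add: r_def degree_diff_le degree_divided_basic)
  moreover have "degree r \<noteq> Suc N"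
    using \<open>coeff r (Suc N) = 0\<close> by (metis degree_0 leading_coeff_0_iff nat.distinct(1))
  ultimately have "degree r \<le> N"
    by (simp add: le_Suc_eq)
  then obtain c where "r = (\<Sum>k\<le>N. smult (c k) (divided_basic k))"
    using Suc.IH by blast
  then have "g = (\<Sum>k\<le>Suc N. smult ((c(Suc N := lc)) k) (divided_basic k))"
    by (simp add: r_def) (metis diff_add_cancel)
  then show ?case by blast
qed

lemma divided_basic_expansion:
  assumes "degree g \<le> N"
  shows "g = (\<Sum>k\<le>N. smult (basic_coeff g k) (divided_basic k))"
proof -
  obtain c where c: "g = (\<Sum>k\<le>N. smult (c k) (divided_basic k))"
    using divided_basic_span[OF assms] by blast
  then have "basic_coeff g k = c k" if "k \<le> N" for k
    using that by (simp add: basic_coeff_sum_smult)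
  then show ?thesis
    by (subst (1) c) (auto intro: sum.cong)
qed

lemma basic_coeff_eq_0:
  assumes "degree g < m"
  shows "basic_coeff g m = 0"
  using basic_coeff_sum_smult[of _ "degree g" m] divided_basic_expansion[of g "degree g"] assms
  by (metis le_refl not_le)

lemma funpow_d_eq_0:
  assumes "degree g < m"
  shows "(d ^^ m) g = 0"
proof -
  have "(d ^^ m) g = (\<Sum>k\<le>degree g. smult (basic_coeff g k) ((d ^^ m) (divided_basic k)))"
    using lin_op_funpow_d[of m]
    by (subst divided_basic_expansion[of g "degree g"]) (simp_all add: lin_op_sum lin_op_def)
  also have "\<dots> = 0"
    using assms by (intro sum.neutral) (auto simp: funpow_d_divided_basic)
  finally show ?thesis .
qed

lemma coeff_sum_smult_divided_basic:
  "coeff (\<Sum>k\<le>N. smult (c k) (divided_basic k)) N = c N * lead_coeff (divided_basic N)"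
proof -
  have "coeff (\<Sum>k\<le>N. smult (c k) (divided_basic k)) N
        = (\<Sum>k\<le>N. if k = N then c N * lead_coeff (divided_basic N) else 0)"
    unfolding coeff_sum by (intro sum.cong) (auto simp: coeff_eq_0 degree_divided_basic)
  then show ?thesis by simp
qed

lemma degree_sum_smult_divided_basic:
  assumes "c N \<noteq> 0"
  shows "degree (\<Sum>k\<le>N. smult (c k) (divided_basic k)) = N"
proof (rule antisym)
  show "degree (\<Sum>k\<le>N. smult (c k) (divided_basic k)) \<le> N"
    by (intro degree_sum_le order.trans[OF degree_smult_le]) (simp_all add: degree_divided_basic)
  from assms lead_coeff_divided_basic show "N \<le> degree (\<Sum>k\<le>N. smult (c k) (divided_basic k))"
    by (intro le_degree) (simp add: coeff_sum_smult_divided_basic)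
qed

lemma basic_coeff_degree:
  assumes "g \<noteq> 0"
  shows "basic_coeff g (degree g) \<noteq> 0"
proof -
  have "lead_coeff g = basic_coeff g (degree g) * lead_coeff (divided_basic (degree g))"
    by (subst (1) divided_basic_expansion[of g "degree g"]) (simp_all add: coeff_sum_smult_divided_basic)
  then show ?thesis
    using assms by auto
qed

lemma Phi_eq_sum:
  assumes "degree g \<le> N"
  shows "Phi a d i g = (\<Sum>j\<le>N. smult (a i j) ((d ^^ (i + j)) g))"
  unfolding Phi_def using assms
  by (intro sum.mono_neutral_left) (auto simp: funpow_d_eq_0)

lemma lin_op_Phi: "lin_op (Phi a d i)"
  unfolding lin_op_def
proof (intro conjI allI)
  fix f g :: "'a poly"
  define N where "N = max (degree f) (degree g)"
  have "degree (f + g) \<le> N"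
    by (simp add: N_def degree_add_le_max)
  then show "Phi a d i (f + g) = Phi a d i f + Phi a d i g"
    using lin_op_funpow_d
    by (simp add: Phi_eq_sum[of _ N] N_def lin_op_def smult_add_right sum.distrib)
next
  fix c and f :: "'a poly"
  have "degree (smult c f) \<le> degree f"
    by (rule degree_smult_le)
  then show "Phi a d i (smult c f) = smult c (Phi a d i f)"
    using lin_op_funpow_d
    by (simp add: Phi_eq_sum[of _ "degree f"] lin_op_def smult_sum_right mult.commute)
qed

lemma poly_Phi_0:
  assumes "degree g \<le> N"
  shows "poly (Phi a d i g) 0 = (\<Sum>k\<le>N. Phi_coeff a i k * basic_coeff g k)"
proof -
  have "poly (Phi a d i g) 0 = (\<Sum>j\<le>N. a i j * basic_coeff g (i + j))"
    using assms by (simp add: Phi_eq_sum poly_sum basic_coeff_def)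
  also have "\<dots> = (\<Sum>k\<le>N + i. Phi_coeff a i k * basic_coeff g k)"
    by (rule sum_Phi_coeff_shift[symmetric])
  also have "\<dots> = (\<Sum>k\<le>N. Phi_coeff a i k * basic_coeff g k)"
    using assms by (intro sum.mono_neutral_right) (auto simp: basic_coeff_eq_0)
  finally show ?thesis .
qed

end

locale delta_functionals = delta_basic d p
  for d :: "'a::field_char_0 poly \<Rightarrow> 'a poly" and p +
  fixes a :: "nat \<Rightarrow> nat \<Rightarrow> 'a"
  assumes leading_nonzero: "\<And>i. a i 0 \<noteq> 0"
begin

lemma Phi_vanishing_imp_eq_0:
  assumes "degree h \<le> N" and "\<forall>i\<le>N. poly (Phi a d i h) 0 = 0"
  shows "h = 0"
proof (rule ccontr)
  assume "h \<noteq> 0"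
  have "poly (Phi a d (degree h) h) 0 = a (degree h) 0 * basic_coeff h (degree h)"
    by (simp add: poly_Phi_0[of h "degree h"] sum_Phi_coeff_diag)
  also have "\<dots> \<noteq> 0"
    using leading_nonzero basic_coeff_degree[OF \<open>h \<noteq> 0\<close>] by simp
  finally show False
    using assms by auto
qed

definition biorthogonal :: "(nat \<Rightarrow> 'a poly) \<Rightarrow> bool" where
  "biorthogonal f \<longleftrightarrow> (\<forall>n. degree (f n) = n) \<and>
     (\<forall>i n. poly (Phi a d i (f n)) 0 = (if i = n then fact n else 0))"

lemma biorthogonal_unique:
  assumes "biorthogonal f" and "biorthogonal g"
  shows "f = g"
proof
  fix n
  have "f n - g n = 0"
  proof (rule Phi_vanishing_imp_eq_0)
    show "degree (f n - g n) \<le> n"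
      using assms by (simp add: biorthogonal_def degree_diff_le)
    show "\<forall>i\<le>n. poly (Phi a d i (f n - g n)) 0 = 0"
      using assms by (simp add: biorthogonal_def lin_op_diff[OF lin_op_Phi])
  qed
  then show "f n = g n" by simp
qed

lemma poly_Phi_sum_biorthogonal:
  assumes "biorthogonal f" and "i \<le> N"
  shows "poly (Phi a d i (\<Sum>n\<le>N. smult (c n) (f n))) 0 = c i * fact i"
  using assms lin_op_Phi[of a i]
  by (simp add: biorthogonal_def lin_op_sum lin_op_def poly_sum
      if_distrib[where f = "\<lambda>x. _ * x"] cong: if_cong)

lemma biorthogonal_expansion:
  assumes "biorthogonal f"
  shows "g = (\<Sum>n\<le>degree g. smult (poly (Phi a d n g) 0 / fact n) (f n))"
    (is "g = ?S")
proof -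
  have "degree ?S \<le> degree g"
    using assms by (intro degree_sum_le order.trans[OF degree_smult_le])
      (simp_all add: biorthogonal_def)
  then have "degree (g - ?S) \<le> degree g"
    by (simp add: degree_diff_le)
  moreover have "\<forall>i\<le>degree g. poly (Phi a d i (g - ?S)) 0 = 0"
    using assms by (simp add: lin_op_diff[OF lin_op_Phi] poly_Phi_sum_biorthogonal)
  ultimately have "g - ?S = 0"
    by (rule Phi_vanishing_imp_eq_0)
  then show ?thesis by simp
qed

lemma biorthogonal_basis:
  assumes "biorthogonal f"
  shows "poly_seq_basis f"
  unfolding poly_seq_basis_def
proof (intro conjI allI impI)
  show "\<exists>c N. g = (\<Sum>n\<le>N. smult (c n) (f n))" for g
    by (intro exI) (rule biorthogonal_expansion[OF assms])
  fix c N n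
  assume "(\<Sum>n\<le>N. smult (c n) (f n)) = 0" and "n \<le> N"
  then have "c n * fact n = 0"
    using poly_Phi_sum_biorthogonal[OF assms, of n N c] lin_op_zero[OF lin_op_Phi] by simp
  then show "c n = 0" by simp
qed

lemma biorthogonal_Lambda_mat:
  "biorthogonal (\<lambda>n. smult (fact n / (\<Prod>k\<le>n. a k 0)) (det (Lambda_mat a p n)))"
  unfolding biorthogonal_def
proof (intro conjI allI)
  fix i n
  define P where "P = (\<Prod>k\<le>n. a k 0)"
  define c where "c k = fact n / P * cofactor (Phi_mat a n) n k" for k
  have "P \<noteq> 0"
    using leading_nonzero by (simp add: P_def)
  have F: "smult (fact n / P) (det (Lambda_mat a p n)) = (\<Sum>k\<le>n. smult (c k) (divided_basic k))"
    by (simp add: det_Lambda_mat c_def divided_basic_def smult_sum_right)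
  have rows: "(\<Sum>k\<le>n. Phi_coeff a j k * c k) = (if j = n then fact n else 0)" for j
  proof (cases "j \<le> n")
    case True
    have "(\<Sum>k\<le>n. Phi_coeff a j k * c k)
          = fact n / P * (\<Sum>k\<le>n. Phi_coeff a j k * cofactor (Phi_mat a n) n k)"
      by (simp add: c_def sum_distrib_left mult.left_commute)
    then show ?thesis
      using Phi_mat_cofactor_last_row[OF True, of a] \<open>P \<noteq> 0\<close> by (simp add: P_def)
  qed (simp add: Phi_coeff_def)
  have "a n 0 * c n = fact n"
    using rows[of n] by (simp add: sum_Phi_coeff_diag)
  then have "c n \<noteq> 0" by auto
  then show "degree (smult (fact n / P) (det (Lambda_mat a p n))) = n"
    unfolding F by (rule degree_sum_smult_divided_basic)
  have "degree (\<Sum>k\<le>n. smult (c k) (divided_basic k)) \<le> n"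
    using \<open>c n \<noteq> 0\<close> degree_sum_smult_divided_basic by simp
  then show "poly (Phi a d i (smult (fact n / P) (det (Lambda_mat a p n)))) 0
             = (if i = n then fact n else 0)"
    unfolding F by (simp add: poly_Phi_0 basic_coeff_sum_smult rows cong: if_cong)
qed

end

theorem mainTheorem1:
  fixes d :: "'a::field_char_0 poly \<Rightarrow> 'a poly"
    and p :: "nat \<Rightarrow> 'a poly"
    and a :: "nat \<Rightarrow> nat \<Rightarrow> 'a"
  assumes "delta_op d"
    and "basic_seq d p"
    and "\<forall>i. a i 0 \<noteq> 0"
  shows "(\<exists>!f :: nat \<Rightarrow> 'a poly. (\<forall>n. degree (f n) = n) \<and>
            (\<forall>i n. poly (Phi a d i (f n)) 0 = (if i = n then fact n else 0)))
       \<and> (\<forall>f :: nat \<Rightarrow> 'a poly. ((\<forall>n. degree (f n) = n) \<and>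
            (\<forall>i n. poly (Phi a d i (f n)) 0 = (if i = n then fact n else 0))) \<longrightarrow>
            (\<forall>n. f n = smult (fact n / (\<Prod>k\<le>n. a k 0)) (det (Lambda_mat a p n)))
            \<and> poly_seq_basis f
            \<and> (\<forall>g. g = (\<Sum>n\<le>degree g. smult (poly (Phi a d n g) 0 / fact n) (f n))))"
proof -
  interpret delta_functionals d p a
    using assms by unfold_locales auto
  let ?F = "\<lambda>n. smult (fact n / (\<Prod>k\<le>n. a k 0)) (det (Lambda_mat a p n))"
  have F: "biorthogonal ?F"
    by (rule biorthogonal_Lambda_mat)
  have unique: "f = ?F" if "biorthogonal f" for f
    using biorthogonal_unique[OF that F] .
  show ?thesis
    unfolding biorthogonal_def[symmetric]
  proof (intro conjI allI impI)
    show "\<exists>!f. biorthogonal f"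
      using F unique by blast
    fix f
    assume "biorthogonal f"
    then have "f = ?F"
      by (rule unique)
    then show "f n = ?F n" for n
      by simp
    show "poly_seq_basis f"
      using biorthogonal_basis[OF \<open>biorthogonal f\<close>] .
    show "g = (\<Sum>n\<le>degree g. smult (poly (Phi a d n g) 0 / fact n) (f n))" for g
      using biorthogonal_expansion[OF \<open>biorthogonal f\<close>] .
  qed
qed

end
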